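(* Let $\chi$ be a kernel as described in the context, and suppose in addition that its first-order algebraic moment vanishes identically: $m_1(\chi,u)=0$ for all $u\in\mathbb{R}^+$. Let $f\in C^{(2)}(\mathbb{R}^+)$. Then for every $x\in\mathbb{R}^+$, $$\lim_{w\to+\infty} w\big[(I_w^{\chi}f)(x)-f(x)\big]=\frac{(\theta f)(x)}{2}.$$
   Context: A kernel is a continuous function $\chi:\mathbb{R}^+\to\mathbb{R}$ satisfying: (i) $\sum_{k=-\infty}^{+\infty}\chi(e^{-k}u)=1$ for every $u\in\mathbb{R}^+$; (ii) $M_2(\chi)<+\infty$ and $\lim_{\gamma\to+\infty}\sum_{|k-\log u|>\gamma}|\chi(e^{-k}u)|\,|k-\log u|^2=0$ uniformly with respect to $u\in\mathbb{R}^+$. Algebraic moments: $m_\nu(\chi,u)=\sum_{k\in\mathbb{Z}}\chi(e^{-k}u)(k-\log u)^\nu$; absolute moments: $M_\nu(\chi,u)=\sum_{k\in\mathbb{Z}}|\chi(e^{-k}u)|\,|k-\log u|^\nu$, $M_\nu(\chi)=\sup_{u>0}M_\nu(\chi,u)$. For $w>0$, $x\in\mathbb{R}^+$: $(I_w^{\chi}f)(x)=\sum_{k\in\mathbb{Z}}\chi(e^{-k}x^w)\,w\int_{k/w}^{(k+1)/w}f(e^u)\,du$. Mellin differential operator: $(\theta f)(x)=xf'(x)$, and $\theta^1=\theta$, $\theta^r=\theta(\theta^{r-1})$. $C(\mathbb{R}^+)$ denotes the bounded continuous functions on $\mathbb{R}^+$, and $C^{(n)}(\mathbb{R}^+)$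 denotes the functions $f\in C(\mathbb{R}^+)$ such that $\theta^j f$ exists and belongs to $C(\mathbb{R}^+)$ for $j=1,\dots,n$. *)

theory Defs
  imports "HOL-Analysis.Analysis"
begin

definition abs_moment_term :: "(real \<Rightarrow> real) \<Rightarrow> nat \<Rightarrow> real \<Rightarrow> int \<Rightarrow> real" where
  "abs_moment_term K nu u k = abs (K (exp (- real_of_int k) * u)) * abs (real_of_int k - ln u) ^ nu"

definition alg_moment :: "(real \<Rightarrow> real) \<Rightarrow> nat \<Rightarrow> real \<Rightarrow> real" where
  "alg_moment K nu u = (\<Sum>\<^sub>\<infinity>k\<in>(UNIV::int set). K (exp (- real_of_int k) * u) * (real_of_int k - ln u) ^ nu)"

definition abs_moment :: "(real \<Rightarrow> real) \<Rightarrow> nat \<Rightarrow> real \<Rightarrow> real" where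
  "abs_moment K nu u = (\<Sum>\<^sub>\<infinity>k\<in>(UNIV::int set). abs_moment_term K nu u k)"

text \<open>Kernel: continuous on R^+, partition of unity (i), and condition (ii):
  M_2(chi) = sup_{u>0} M_2(chi,u) finite (the series converge and are uniformly bounded),
  and the tails of the second absolute moment tend to 0 uniformly in u.\<close>
definition mellin_kernel :: "(real \<Rightarrow> real) \<Rightarrow> bool" where
  "mellin_kernel K \<longleftrightarrow>
     continuous_on {0<..} K \<and>
     (\<forall>u>0. ((\<lambda>k::int. K (exp (- real_of_int k) * u)) has_sum 1) UNIV) \<and>
     (\<forall>u>0. abs_moment_term K 2 u summable_on UNIV) \<and>
     (\<exists>B. \<forall>u>0. abs_moment K 2 u \<le> B) \<and>
     (\<forall>\<epsilon>>0. \<exists>\<Gamma>. \<forall>\<gamma>\<ge>\<Gamma>. \<forall>u>0.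
        (\<Sum>\<^sub>\<infinity>k\<in>{k::int. \<bar>real_of_int k - ln u\<bar> > \<gamma>}. abs_moment_term K 2 u k) < \<epsilon>)"

definition kantorovich_op :: "(real \<Rightarrow> real) \<Rightarrow> real \<Rightarrow> (real \<Rightarrow> real) \<Rightarrow> real \<Rightarrow> real" where
  "kantorovich_op K w f x =
     (\<Sum>\<^sub>\<infinity>k\<in>(UNIV::int set). K (exp (- real_of_int k) * x powr w) *
        (w * integral {real_of_int k / w .. (real_of_int k + 1) / w} (\<lambda>u. f (exp u))))"

definition mellin_theta :: "(real \<Rightarrow> real) \<Rightarrow> real \<Rightarrow> real" where
  "mellin_theta f = (\<lambda>x. x * deriv f x)"

definition bcont_pos :: "(real \<Rightarrow> real) \<Rightarrow> bool" where
  "bcont_pos f \<longleftrightarrow> continuous_on {0<..} f \<and> bounded (f ` {0<..})"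

text \<open>C^(n)(R^+): theta^j f exists (i.e. theta^(j-1) f is differentiable on R^+)
  and is bounded continuous on R^+, for j = 0..n.\<close>
definition Cn_mellin :: "nat \<Rightarrow> (real \<Rightarrow> real) \<Rightarrow> bool" where
  "Cn_mellin n f \<longleftrightarrow>
     (\<forall>j\<le>n. bcont_pos ((mellin_theta ^^ j) f)) \<and>
     (\<forall>j<n. \<forall>x>0. (mellin_theta ^^ j) f differentiable (at x))"

end

theory Submission imports Defs begin

text \<open>Substituting \<open>s = ln y\<close> turns \<open>\<theta>\<close> into the ordinary derivative of \<open>g = f \<circ> exp\<close>, and
  \<open>I\<^sub>w\<^sup>\<chi> f (x)\<close> into a \<open>\<chi>\<close>-weighted sum of averages of \<open>g\<close> over \<open>[k/w, (k+1)/w]\<close>.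
  Expanding \<open>g\<close> to second order around \<open>t = ln x\<close>, such an average equals
  \<open>g t + g' t ((k - w t) + 1/2) / w + O(((\<bar>k - w t\<bar> + 1) / w)\<^sup>2)\<close>. Summing against the kernel,
  \<open>m\<^sub>0 = 1\<close> reproduces \<open>f x\<close>, \<open>m\<^sub>1 = 0\<close> cancels the term in \<open>k - w t\<close>, the shift \<open>1/2\<close>
  leaves \<open>\<theta>f(x) / (2w)\<close>, and the remainder is \<open>O(1/w\<^sup>2)\<close> uniformly because \<open>M\<^sub>2(\<chi>) < \<infinity>\<close>.\<close>

lemma summable_on_real_dominated:
  fixes f h :: "'a \<Rightarrow> real"
  assumes "h summable_on A" "\<And>k. k \<in> A \<Longrightarrow> \<bar>f k\<bar> \<le> h k"
  shows "f summable_on A" "\<bar>infsum f A\<bar> \<le> infsum h A"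
proof -
  have "(\<lambda>k. norm (f k)) summable_on A"
    by (rule summable_on_comparison_test[OF assms(1)]) (use assms(2) in auto)
  then show s: "f summable_on A" using summable_on_iff_abs_summable_on_real by blast
  show "\<bar>infsum f A\<bar> \<le> infsum h A"
    using norm_infsum_le[OF has_sum_infsum[OF s] has_sum_infsum[OF assms(1)]] assms(2) by auto
qed

lemma taylor_second_order_bound:
  fixes g g1 g2 :: "real \<Rightarrow> real"
  assumes d1: "\<And>s. (g has_real_derivative g1 s) (at s)"
    and d2: "\<And>s. (g1 has_real_derivative g2 s) (at s)"
    and bound: "\<And>s. \<bar>g2 s\<bar> \<le> C"
  shows "\<bar>g u - g t - g1 t * (u - t)\<bar> \<le> C / 2 * (u - t)^2"
proof (cases "u = t")
  case True then show ?thesis by simp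
next
  case False
  define diff where "diff = (\<lambda>m::nat. if m = 0 then g else if m = 1 then g1 else g2)"
  have "\<exists>\<xi>. (if u < t then u < \<xi> \<and> \<xi> < t else t < \<xi> \<and> \<xi> < u) \<and>
    g u = (\<Sum>m<2. (diff m t / fact m) * (u - t)^m) + (diff 2 \<xi> / fact 2) * (u - t)^2"
    by (rule Taylor[of 2 diff g "min u t" "max u t"])
       (use False d1 d2 in \<open>auto simp: diff_def less_2_cases_iff\<close>)
  then obtain \<xi> where "g u = g t + g1 t * (u - t) + g2 \<xi> / 2 * (u - t)^2"
    by (auto simp: diff_def numeral_2_eq_2)
  then have "\<bar>g u - g t - g1 t * (u - t)\<bar> = \<bar>g2 \<xi>\<bar> / 2 * (u - t)^2"
    by (simp add: abs_mult)
  also have "\<dots> \<le> C / 2 * (u - t)^2"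
    using bound[of \<xi>] by (intro mult_right_mono) auto
  finally show ?thesis .
qed

lemma average_integral_taylor_bound:
  fixes g :: "real \<Rightarrow> real"
  assumes cont: "continuous_on UNIV g"
    and taylor: "\<And>u. \<bar>g u - g t - g1t * (u - t)\<bar> \<le> C * (u - t)^2"
    and C: "C \<ge> 0" and w: "w > 0"
  shows "\<bar>w * integral {a..a + 1/w} g - (g t + g1t * ((a - t) + 1 / (2 * w)))\<bar>
         \<le> C * (\<bar>a - t\<bar> + 1 / w)^2"
proof -
  define b where "b = a + 1/w"
  have ab: "a \<le> b" using w by (simp add: b_def)
  define G where "G = (\<lambda>u. g t * u + g1t * (u - t)^2 / 2)"
  have lin: "((\<lambda>u. g t + g1t * (u - t)) has_integral (G b - G a)) {a..b}"
    unfolding G_def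
    by (rule fundamental_theorem_of_calculus[OF ab])
       (auto intro!: derivative_eq_intros
             simp: has_real_derivative_iff_has_vector_derivative[symmetric])
  define R where "R = (\<lambda>u. g u - (g t + g1t * (u - t)))"
  have "g integrable_on {a..b}"
    using cont by (intro integrable_continuous_real) (auto intro: continuous_on_subset)
  from integral_diff[OF this has_integral_integrable[OF lin]]
  have integral_R: "integral {a..b} R = integral {a..b} g - (G b - G a)"
    unfolding R_def integral_unique[OF lin] .
  have "norm (integral {a..b} R) \<le> C * (\<bar>a - t\<bar> + 1 / w)^2 * (b - a)"
  proof (rule integral_bound[OF ab])
    show "continuous_on {a..b} R" unfolding R_def
      by (intro continuous_intros continuous_on_subset[OF cont]) auto
    fix u assume "u \<in> {a..b}"
    then have "\<bar>u - t\<bar> \<le> \<bar>a - t\<bar> + 1 / w" by (auto simp: b_def)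
    then have "(u - t)^2 \<le> (\<bar>a - t\<bar> + 1 / w)^2"
      by (metis abs_ge_zero power2_abs power_mono)
    then have "C * (u - t)^2 \<le> C * (\<bar>a - t\<bar> + 1 / w)^2"
      using C by (rule mult_left_mono)
    then show "norm (R u) \<le> C * (\<bar>a - t\<bar> + 1 / w)^2"
      using taylor[of u] unfolding R_def real_norm_def by linarith
  qed
  then have "w * \<bar>integral {a..b} R\<bar> \<le> w * (C * (\<bar>a - t\<bar> + 1 / w)^2 * (1 / w))"
    using w by (intro mult_left_mono) (auto simp: b_def)
  then have "\<bar>w * integral {a..b} R\<bar> \<le> C * (\<bar>a - t\<bar> + 1 / w)^2"
    using w by (simp add: abs_mult)
  moreover have "w * (G b - G a) = g t + g1t * ((a - t) + 1 / (2 * w))"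
    unfolding G_def b_def using w by (simp add: field_simps power2_eq_square)
  ultimately show ?thesis
    using integral_R by (simp add: b_def right_diff_distrib)
qed

lemma weighted_sum_second_order_bound:
  fixes c d A :: "int \<Rightarrow> real"
  assumes mass: "(c has_sum 1) UNIV"
    and first_moment: "infsum (\<lambda>k. c k * d k) UNIV = 0"
    and second_moment: "(\<lambda>k. \<bar>c k\<bar> * (\<bar>d k\<bar> + 1)^2) summable_on UNIV"
      "(\<Sum>\<^sub>\<infinity>k\<in>UNIV. \<bar>c k\<bar> * (\<bar>d k\<bar> + 1)^2) \<le> B"
    and expansion: "\<And>k. \<bar>A k - (a + b * d k + e)\<bar> \<le> C * (\<bar>d k\<bar> + 1)^2"
    and C: "C \<ge> 0"
  shows "\<bar>infsum (\<lambda>k. c k * A k) UNIV - (a + e)\<bar> \<le> C * B"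
proof -
  define Q where "Q = (\<lambda>k. \<bar>c k\<bar> * (\<bar>d k\<bar> + 1)^2)"
  define E where "E = (\<lambda>k. A k - (a + b * d k + e))"
  have Q_ge: "\<bar>c k\<bar> \<le> Q k" "\<bar>c k * d k\<bar> \<le> Q k" for k
  proof -
    have "1 \<le> (\<bar>d k\<bar> + 1)^2" "\<bar>d k\<bar> \<le> (\<bar>d k\<bar> + 1)^2"
      by (simp_all add: one_le_power power2_eq_square algebra_simps)
    then show "\<bar>c k\<bar> \<le> Q k" "\<bar>c k * d k\<bar> \<le> Q k"
      unfolding Q_def abs_mult by (metis abs_ge_zero mult_1_right mult_left_mono)+
  qed
  have cE_le: "\<bar>c k * E k\<bar> \<le> C * Q k" for k
  proof -
    have "\<bar>c k * E k\<bar> \<le> \<bar>c k\<bar> * (C * (\<bar>d k\<bar> + 1)^2)"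
      unfolding abs_mult E_def by (intro mult_left_mono expansion) auto
    then show ?thesis by (simp add: Q_def algebra_simps)
  qed
  have sQ: "(\<lambda>k. C * Q k) summable_on UNIV"
    using second_moment(1) by (simp add: Q_def summable_on_cmult_right)
  have sc: "c summable_on UNIV" and scd: "(\<lambda>k. c k * d k) summable_on UNIV"
    by (rule summable_on_real_dominated(1)[OF second_moment(1)[folded Q_def]], rule Q_ge)+
  have scE: "(\<lambda>k. c k * E k) summable_on UNIV"
    using summable_on_real_dominated(1)[OF sQ cE_le] .
  have "\<bar>infsum (\<lambda>k. c k * E k) UNIV\<bar> \<le> infsum (\<lambda>k. C * Q k) UNIV"
    using summable_on_real_dominated(2)[OF sQ cE_le] .
  also have "\<dots> \<le> C * B"
    using infsum_cmult_right[OF second_moment(1), of C] second_moment(2) C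
    by (simp add: Q_def mult_left_mono)
  finally have remainder: "\<bar>infsum (\<lambda>k. c k * E k) UNIV\<bar> \<le> C * B" .
  have "infsum (\<lambda>k. c k * A k) UNIV
      = infsum (\<lambda>k. (a + e) * c k + b * (c k * d k) + c k * E k) UNIV"
    by (intro infsum_cong) (simp add: E_def algebra_simps)
  also have "\<dots> = (a + e) * infsum c UNIV + b * infsum (\<lambda>k. c k * d k) UNIV
      + infsum (\<lambda>k. c k * E k) UNIV"
    using sc scd scE
    by (simp only: infsum_add summable_on_add summable_on_cmult_right infsum_cmult_right)
  finally show ?thesis
    using remainder first_moment infsumI[OF mass] by simp
qed

lemma mellin_kernel_bounded_near_one:
  fixes K :: "real \<Rightarrow> real"
  assumes "mellin_kernel K"
  obtains M where "M \<ge> 0" "\<And>y. y \<in> {exp (-1)..exp 1} \<Longrightarrow> \<bar>K y\<bar> \<le> M"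
proof -
  have "continuous_on {0<..} K" using assms unfolding mellin_kernel_def by blast
  moreover have "{exp (-1)..exp 1} \<subseteq> {0::real<..}"
    using exp_gt_zero[of "-1"] by (auto simp del: exp_gt_zero)
  ultimately have "continuous_on {exp (-1)..exp 1} K" by (rule continuous_on_subset)
  then have "compact (K ` {exp (-1)..exp 1})" by (rule compact_continuous_image) simp
  then obtain M where "\<And>y. y \<in> {exp (-1)..exp 1} \<Longrightarrow> \<bar>K y\<bar> \<le> M"
    using compact_imp_bounded bounded_real by (metis image_eqI)
  then show ?thesis by (intro that[of "max M 0"]) (auto intro: le_max_iff_disj[THEN iffD2])
qed

text \<open>Where \<open>\<bar>k - ln u\<bar> \<ge> 1\<close> the shifted weight \<open>(\<bar>k - ln u\<bar> + 1)\<^sup>2\<close> is at most four times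
  the second moment weight; the remaining \<open>k\<close> lie in \<open>{\<lfloor>ln u\<rfloor>, \<lfloor>ln u\<rfloor> + 1}\<close>, where
  \<open>e\<^sup>-\<^sup>k u \<in> [e\<^sup>-\<^sup>1, e]\<close>.\<close>

lemma mellin_kernel_shifted_moment_term_le:
  assumes M: "M \<ge> 0" "\<And>y. y \<in> {exp (-1)..exp 1} \<Longrightarrow> \<bar>K y\<bar> \<le> M" and u: "u > 0"
  shows "\<bar>K (exp (- real_of_int k) * u)\<bar> * (\<bar>real_of_int k - ln u\<bar> + 1)^2
    \<le> 4 * abs_moment_term K 2 u k + (if k \<in> {\<lfloor>ln u\<rfloor>, \<lfloor>ln u\<rfloor> + 1} then 4 * M else 0)"
proof -
  define d where "d = real_of_int k - ln u"
  have term_ge: "abs_moment_term K 2 u k \<ge> 0" by (simp add: abs_moment_term_def)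
  show ?thesis
  proof (cases "\<bar>d\<bar> \<ge> 1")
    case True
    have "(\<bar>d\<bar> + 1)^2 \<le> (2 * \<bar>d\<bar>)^2" using True by (intro power_mono) auto
    then have "\<bar>K (exp (- real_of_int k) * u)\<bar> * (\<bar>d\<bar> + 1)^2
        \<le> \<bar>K (exp (- real_of_int k) * u)\<bar> * (4 * \<bar>d\<bar>^2)"
      by (intro mult_left_mono) (auto simp: power_mult_distrib)
    then show ?thesis using M(1) by (simp add: abs_moment_term_def d_def mult.left_commute)
  next
    case False
    have "exp (- real_of_int k) * u = exp (- d)"
      using u by (simp add: d_def exp_diff exp_minus field_simps)
    then have "\<bar>K (exp (- real_of_int k) * u)\<bar> \<le> M"
      using False by (intro M(2)) auto
    moreover have "(\<bar>d\<bar> + 1)^2 \<le> 2^2" using False by (intro power_mono) auto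
    ultimately have "\<bar>K (exp (- real_of_int k) * u)\<bar> * (\<bar>d\<bar> + 1)^2 \<le> M * 4"
      by (intro mult_mono) auto
    moreover have "k \<in> {\<lfloor>ln u\<rfloor>, \<lfloor>ln u\<rfloor> + 1}"
    proof -
      have "ln u - 1 < real_of_int k" "real_of_int k < ln u + 1" using False by (auto simp: d_def)
      then have "\<lfloor>ln u\<rfloor> \<le> k" "k \<le> \<lfloor>ln u\<rfloor> + 1" by linarith+
      then show ?thesis by auto
    qed
    ultimately show ?thesis using term_ge by (simp add: d_def)
  qed
qed

lemma mellin_kernel_shifted_moment_bound:
  assumes "mellin_kernel K"
  obtains B where "\<And>u. u > 0 \<Longrightarrow>
      (\<lambda>k::int. \<bar>K (exp (- real_of_int k) * u)\<bar> * (\<bar>real_of_int k - ln u\<bar> + 1)^2) summable_on UNIV"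
    "\<And>u. u > 0 \<Longrightarrow>
      (\<Sum>\<^sub>\<infinity>k\<in>UNIV. \<bar>K (exp (- real_of_int k) * u)\<bar> * (\<bar>real_of_int k - ln u\<bar> + 1)^2) \<le> B"
proof -
  obtain B2 where B2: "\<And>u. u > 0 \<Longrightarrow> abs_moment K 2 u \<le> B2"
    and summ: "\<And>u. u > 0 \<Longrightarrow> abs_moment_term K 2 u summable_on UNIV"
    using assms unfolding mellin_kernel_def by blast
  obtain M where M: "M \<ge> 0" "\<And>y. y \<in> {exp (-1)..exp 1} \<Longrightarrow> \<bar>K y\<bar> \<le> M"
    using mellin_kernel_bounded_near_one[OF assms] by blast
  have "(\<lambda>k::int. \<bar>K (exp (- real_of_int k) * u)\<bar> * (\<bar>real_of_int k - ln u\<bar> + 1)^2)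
      summable_on UNIV \<and>
    (\<Sum>\<^sub>\<infinity>k\<in>UNIV. \<bar>K (exp (- real_of_int k) * u)\<bar> * (\<bar>real_of_int k - ln u\<bar> + 1)^2)
      \<le> 4 * B2 + 8 * M" if u: "u > 0" for u
  proof -
    define F where "F = {\<lfloor>ln u\<rfloor>, \<lfloor>ln u\<rfloor> + 1}"
    define peak where "peak = (\<lambda>k. if k \<in> F then 4 * M else 0)"
    define h where "h = (\<lambda>k. 4 * abs_moment_term K 2 u k + peak k)"
    have "peak summable_on UNIV"
      unfolding peak_def
      by (subst summable_on_cong_neutral[where T = F and g = "\<lambda>_. 4 * M"]) (auto simp: F_def)
    moreover have "infsum peak UNIV = 8 * M"
      unfolding peak_def
      by (subst infsum_cong_neutral[where T = F and g = "\<lambda>_. 4 * M"]) (auto simp: F_def)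
    moreover have "(\<lambda>k. 4 * abs_moment_term K 2 u k) summable_on UNIV"
      using summ[OF u] by (rule summable_on_cmult_right)
    moreover have "infsum (\<lambda>k. 4 * abs_moment_term K 2 u k) UNIV \<le> 4 * B2"
      using infsum_cmult_right[OF summ[OF u], of 4] B2[OF u] by (simp add: abs_moment_def)
    ultimately have h: "h summable_on UNIV" "infsum h UNIV \<le> 4 * B2 + 8 * M"
      unfolding h_def by (simp_all add: summable_on_add infsum_add)
    have "\<bar>\<bar>K (exp (- real_of_int k) * u)\<bar> * (\<bar>real_of_int k - ln u\<bar> + 1)^2\<bar> \<le> h k" for k
      using mellin_kernel_shifted_moment_term_le[where K = K and k = k, OF M u]
      by (simp add: h_def peak_def F_def)
    from summable_on_real_dominated[OF h(1) this] h(2) show ?thesis by simp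
  qed
  then show ?thesis using that by blast
qed

lemma has_real_derivative_comp_exp:
  assumes "f differentiable (at (exp s))"
  shows "((\<lambda>s. f (exp s)) has_real_derivative mellin_theta f (exp s)) (at s)"
proof -
  have "(f has_real_derivative deriv f (exp s)) (at (exp s))"
    using assms DERIV_deriv_iff_real_differentiable by blast
  from DERIV_chain2[OF this DERIV_exp] show ?thesis
    by (simp add: mellin_theta_def mult.commute)
qed

lemma Cn_mellin_2_taylor_exp:
  fixes f :: "real \<Rightarrow> real"
  assumes "Cn_mellin 2 f"
  obtains C where "C \<ge> 0" "continuous_on UNIV (\<lambda>s. f (exp s))"
    "\<And>u t. \<bar>f (exp u) - f (exp t) - mellin_theta f (exp t) * (u - t)\<bar> \<le> C * (u - t)^2"
proof -
  have bounded: "bcont_pos (mellin_theta (mellin_theta f))"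
    and diff: "\<And>y. y > 0 \<Longrightarrow> f differentiable (at y)"
      "\<And>y. y > 0 \<Longrightarrow> mellin_theta f differentiable (at y)"
    using assms unfolding Cn_mellin_def
    by (auto dest: spec[of _ 0] spec[of _ 1] spec[of _ 2] simp: numeral_2_eq_2)
  obtain C2 where C2: "\<And>y. y > 0 \<Longrightarrow> \<bar>mellin_theta (mellin_theta f) y\<bar> \<le> C2"
    using bounded unfolding bcont_pos_def bounded_real by auto
  have d1: "((\<lambda>s. f (exp s)) has_real_derivative mellin_theta f (exp s)) (at s)" for s
    by (intro has_real_derivative_comp_exp diff) simp
  have d2: "((\<lambda>s. mellin_theta f (exp s)) has_real_derivative
      mellin_theta (mellin_theta f) (exp s)) (at s)" for s
    by (intro has_real_derivative_comp_exp diff) simp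
  show ?thesis
  proof
    show "C2 / 2 \<ge> 0" using C2[of 1] by simp
    show "continuous_on UNIV (\<lambda>s. f (exp s))"
      using d1 by (intro continuous_at_imp_continuous_on) (auto intro: DERIV_isCont)
    show "\<bar>f (exp u) - f (exp t) - mellin_theta f (exp t) * (u - t)\<bar> \<le> C2 / 2 * (u - t)^2" for u t
      by (rule taylor_second_order_bound[OF d1 d2]) (simp add: C2)
  qed
qed

lemma kantorovich_op_second_order_estimate:
  fixes K f :: "real \<Rightarrow> real"
  assumes kernel: "mellin_kernel K"
    and first_moment: "\<forall>u>0. alg_moment K 1 u = 0"
    and cont: "continuous_on UNIV (\<lambda>s. f (exp s))"
    and taylor: "\<And>u t. \<bar>f (exp u) - f (exp t) - mellin_theta f (exp t) * (u - t)\<bar> \<le> C * (u - t)^2"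
    and C: "C \<ge> 0" and x: "x > 0"
  obtains B where "\<And>w. w > 0 \<Longrightarrow>
    \<bar>w * (kantorovich_op K w f x - f x) - mellin_theta f x / 2\<bar> \<le> C * B / w"
proof -
  obtain B where B: "\<And>u. u > 0 \<Longrightarrow>
      (\<lambda>k::int. \<bar>K (exp (- real_of_int k) * u)\<bar> * (\<bar>real_of_int k - ln u\<bar> + 1)^2) summable_on UNIV"
    "\<And>u. u > 0 \<Longrightarrow>
      (\<Sum>\<^sub>\<infinity>k\<in>UNIV. \<bar>K (exp (- real_of_int k) * u)\<bar> * (\<bar>real_of_int k - ln u\<bar> + 1)^2) \<le> B"
    using mellin_kernel_shifted_moment_bound[OF kernel] by blast
  define g where "g = (\<lambda>s. f (exp s))"
  define t where "t = ln x"
  define \<theta> where "\<theta> = mellin_theta f x"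
  have g_t: "g t = f x" using x by (simp add: g_def t_def)
  have taylor_g: "\<bar>g v - g t - \<theta> * (v - t)\<bar> \<le> C * (v - t)^2" for v
    using taylor[of v t] x by (simp add: g_def t_def \<theta>_def)
  have "\<bar>w * (kantorovich_op K w f x - f x) - \<theta> / 2\<bar> \<le> C * B / w" if w: "w > 0" for w
  proof -
    define u where "u = x powr w"
    have u: "u > 0" and ln_u: "ln u = w * t" using x by (simp_all add: u_def t_def)
    define c where "c = (\<lambda>k::int. K (exp (- real_of_int k) * u))"
    define d where "d = (\<lambda>k::int. real_of_int k - w * t)"
    define A where "A = (\<lambda>k::int. w * integral {real_of_int k / w .. (real_of_int k + 1) / w} g)"
    have expansion: "\<bar>A k - (f x + \<theta> / w * d k + \<theta> / (2 * w))\<bar> \<le> C / w^2 * (\<bar>d k\<bar> + 1)^2" for k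
    proof -
      have "real_of_int k / w - t = d k / w" using w by (simp add: d_def field_simps)
      moreover have "(real_of_int k + 1) / w = real_of_int k / w + 1 / w"
        by (simp add: add_divide_distrib)
      moreover have "\<bar>d k / w\<bar> + 1 / w = (\<bar>d k\<bar> + 1) / w" using w by (simp add: add_divide_distrib)
      moreover have "\<theta> * (d k / w + 1 / (2 * w)) = \<theta> / w * d k + \<theta> / (2 * w)"
        by (simp add: algebra_simps)
      ultimately show ?thesis
        using average_integral_taylor_bound[OF cont[folded g_def] taylor_g C w,
            of "real_of_int k / w"]
        by (simp add: A_def g_t power_divide)
    qed
    have "\<bar>infsum (\<lambda>k. c k * A k) UNIV - (f x + \<theta> / (2 * w))\<bar> \<le> C / w^2 * B"
    proof (rule weighted_sum_second_order_bound[OF _ _ _ _ expansion])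
      show "(c has_sum 1) UNIV" using kernel u unfolding mellin_kernel_def c_def by blast
      show "infsum (\<lambda>k. c k * d k) UNIV = 0"
        using first_moment u unfolding alg_moment_def c_def d_def ln_u[symmetric] by simp
      show "(\<lambda>k. \<bar>c k\<bar> * (\<bar>d k\<bar> + 1)^2) summable_on UNIV"
        "(\<Sum>\<^sub>\<infinity>k\<in>UNIV. \<bar>c k\<bar> * (\<bar>d k\<bar> + 1)^2) \<le> B"
        using B[OF u] by (simp_all add: c_def d_def ln_u)
    qed (use C in simp)
    moreover have "kantorovich_op K w f x = infsum (\<lambda>k. c k * A k) UNIV"
      unfolding kantorovich_op_def c_def A_def u_def g_def ..
    ultimately have "\<bar>kantorovich_op K w f x - (f x + \<theta> / (2 * w))\<bar> \<le> C / w^2 * B"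
      by simp
    then have "w * \<bar>kantorovich_op K w f x - (f x + \<theta> / (2 * w))\<bar> \<le> w * (C / w^2 * B)"
      using w by (intro mult_left_mono) auto
    moreover have "w * (kantorovich_op K w f x - f x) - \<theta> / 2
        = w * (kantorovich_op K w f x - (f x + \<theta> / (2 * w)))"
      using w by (simp add: field_simps)
    ultimately show ?thesis
      using w by (simp add: abs_mult power2_eq_square)
  qed
  then show ?thesis unfolding \<theta>_def by (rule that)
qed

theorem theorem2:
  fixes K f :: "real \<Rightarrow> real" and x :: real
  assumes "mellin_kernel K"
    and "\<forall>u>0. alg_moment K 1 u = 0"
    and "Cn_mellin 2 f"
    and "x > 0"
  shows "((\<lambda>w. w * (kantorovich_op K w f x - f x)) \<longlongrightarrow> mellin_theta f x / 2) at_top"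
proof -
  obtain C where "C \<ge> 0" "continuous_on UNIV (\<lambda>s. f (exp s))"
    "\<And>u t. \<bar>f (exp u) - f (exp t) - mellin_theta f (exp t) * (u - t)\<bar> \<le> C * (u - t)^2"
    using Cn_mellin_2_taylor_exp[OF assms(3)] by blast
  then obtain B where estimate: "\<And>w. w > 0 \<Longrightarrow>
      \<bar>w * (kantorovich_op K w f x - f x) - mellin_theta f x / 2\<bar> \<le> C * B / w"
    using kantorovich_op_second_order_estimate[OF assms(1,2) _ _ _ assms(4)] by metis
  have "((\<lambda>w. C * B / w) \<longlongrightarrow> 0) at_top"
    by (intro tendsto_divide_0[OF tendsto_const] filterlim_at_top_imp_at_infinity filterlim_ident)
  then have "((\<lambda>w. w * (kantorovich_op K w f x - f x) - mellin_theta f x / 2) \<longlongrightarrow> 0) at_top"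
    by (rule Lim_null_comparison[rotated])
       (use estimate in \<open>auto intro: eventually_at_top_linorderI[of 1]\<close>)
  then show ?thesis by (rule LIM_zero_cancel)
qed

end
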